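(* Let $\mathbb{F}\in\{\mathbb{R},\mathbb{C}\}$, let $F=\{f_i\}_{i=1}^n$ be a $2_c$-uniform $(n,k)$-frame in $\mathbb{F}^k$ with analysis operator $V$, and let $Q$ be its Seidel matrix, i.e. the $n\times n$ matrix with $VV^*=\frac{k}{n}I_n+c_{n,k}Q$, where $c_{n,k}=\sqrt{\frac{k(n-k)}{n^2(n-1)}}$. Then for every $1\le m\le n$, $$e_m^{\infty}(F)\le \frac{k}{n}+(m-1)c_{n,k},$$ with equality if and only if some $m\times m$ principal submatrix $Q_m$ of $Q$ (obtained by keeping the same set of $m$ rows and columns) is switching equivalent to $J_m-I_m$, where $J_m$ is the $m\times m$ all-ones matrix.
   Context: An $(n,k)$-frame is a Parseval frame $\{f_i\}_{i=1}^n$ for $\mathbb{F}^k$; its analysis operator $V:\mathbb{F}^k\to\mathbb{F}^n$, $Vx=(\langle x,f_i\rangle)_{i=1}^n$, is an isometry. Let $\mathcal{D}_m$ be the set of $n\times n$ diagonal matrices with exactly $m$ diagonal entries equal to $1$ and the rest $0$, and $e_m^{\infty}(F)=\max\{\|V^*DV\|: D\in\mathcal{D}_m\}$ (operator norm). $F$ is called $m$-uniform if $\|V^*DV\|$ is the same for all $D\in\mathcal{D}_m$, and $m_c$-uniform if it is $\ell$-uniform for every $\ell=1,\dots,m$; a $2_c$-uniform $(n,k)$-frame is exactly an equiangular Parseval frame, and for it $VV^*=\frac{k}{n}I+c_{n,k}Q$ with $Q$ a Seidel matrix. A Seidel matrix is a self-adjoint $n\times n$ matrix with zero diagonal and off-diagonal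 entries of modulus $1$. Two Seidel matrices $Q,S$ are switching equivalent if $Q=PDSD^{-1}P^{-1}$ for some permutation matrix $P$ and some diagonal matrix $D$ whose diagonal entries have modulus $1$. *)

theory Defs
  imports Complex_Main "HOL-Combinatorics.Permutations"
begin

text \<open>The scalar field F is modelled as a subset K of the complex numbers,
  K = \<real> (real case) or K = UNIV (complex case). Vectors in F^k are functions
  nat => complex with entries in K at indices < k (entries elsewhere are irrelevant);
  n x k matrices are functions nat => nat => complex, used only at indices below the size.
  A frame is f :: nat => nat => complex, f i = the i-th frame vector (i < n).\<close>

definition vnorm :: "nat \<Rightarrow> (nat \<Rightarrow> complex) \<Rightarrow> real" where
  "vnorm k x = sqrt (\<Sum>j<k. (cmod (x j))\<^sup>2)"

definition opnorm :: "complex set \<Rightarrow> nat \<Rightarrow> (nat \<Rightarrow> nat \<Rightarrow> complex) \<Rightarrow> real" where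
  "opnorm K k A = Sup {vnorm k (\<lambda>i. \<Sum>j<k. A i j * x j) | x.
                        (\<forall>j<k. x j \<in> K) \<and> vnorm k x = 1}"

text \<open>Analysis operator V (n x k matrix): (V x)_i = <x, f_i> = sum_j x_j * cnj (f_i j).\<close>
definition analysis :: "(nat \<Rightarrow> nat \<Rightarrow> complex) \<Rightarrow> nat \<Rightarrow> nat \<Rightarrow> complex" where
  "analysis f i j = cnj (f i j)"

text \<open>(n,k)-frame: Parseval frame for F^k, i.e. vectors in F^k whose analysis operator is
  an isometry, V^* V = I_k.\<close>
definition parseval_frame :: "complex set \<Rightarrow> nat \<Rightarrow> nat \<Rightarrow> (nat \<Rightarrow> nat \<Rightarrow> complex) \<Rightarrow> bool" where
  "parseval_frame K n k f \<longleftrightarrow>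
     (\<forall>i<n. \<forall>j<k. f i j \<in> K) \<and>
     (\<forall>j<k. \<forall>l<k. (\<Sum>i<n. cnj (analysis f i j) * analysis f i l) = (if j = l then 1 else 0))"

text \<open>D in D_m is identified with the set S of positions of its m ones; V^* D V:\<close>
definition VDV :: "(nat \<Rightarrow> nat \<Rightarrow> complex) \<Rightarrow> nat set \<Rightarrow> nat \<Rightarrow> nat \<Rightarrow> complex" where
  "VDV f S j l = (\<Sum>i\<in>S. cnj (analysis f i j) * analysis f i l)"

definition Dsets :: "nat \<Rightarrow> nat \<Rightarrow> nat set set" where
  "Dsets n m = {S. S \<subseteq> {..<n} \<and> card S = m}"

definition e_inf :: "complex set \<Rightarrow> nat \<Rightarrow> nat \<Rightarrow> (nat \<Rightarrow> nat \<Rightarrow> complex) \<Rightarrow> nat \<Rightarrow> real" where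
  "e_inf K n k f m = Max ((\<lambda>S. opnorm K k (VDV f S)) ` Dsets n m)"

definition uniform :: "complex set \<Rightarrow> nat \<Rightarrow> nat \<Rightarrow> (nat \<Rightarrow> nat \<Rightarrow> complex) \<Rightarrow> nat \<Rightarrow> bool" where
  "uniform K n k f m \<longleftrightarrow>
     (\<forall>S\<in>Dsets n m. \<forall>T\<in>Dsets n m. opnorm K k (VDV f S) = opnorm K k (VDV f T))"

definition c_uniform :: "complex set \<Rightarrow> nat \<Rightarrow> nat \<Rightarrow> (nat \<Rightarrow> nat \<Rightarrow> complex) \<Rightarrow> nat \<Rightarrow> bool" where
  "c_uniform K n k f m \<longleftrightarrow> (\<forall>l. 1 \<le> l \<and> l \<le> m \<longrightarrow> uniform K n k f l)"

definition seidel :: "nat \<Rightarrow> (nat \<Rightarrow> nat \<Rightarrow> complex) \<Rightarrow> bool" where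
  "seidel n Q \<longleftrightarrow> (\<forall>i<n. \<forall>j<n. Q i j = cnj (Q j i)) \<and> (\<forall>i<n. Q i i = 0) \<and>
                   (\<forall>i<n. \<forall>j<n. i \<noteq> j \<longrightarrow> cmod (Q i j) = 1)"

definition c_nk :: "nat \<Rightarrow> nat \<Rightarrow> real" where
  "c_nk n k = sqrt (real k * (real n - real k) / ((real n)\<^sup>2 * (real n - 1)))"

text \<open>Switching equivalence of m x m matrices over F: A = P D B D^{-1} P^{-1}, P the
  permutation matrix of a permutation of {0..<m} (entrywise: (P M P^{-1})_{ij} = M_{q i, q j}
  with q = p^{-1}), D diagonal with unimodular diagonal entries in F.\<close>
definition switching_equiv :: "complex set \<Rightarrow> nat \<Rightarrow> (nat \<Rightarrow> nat \<Rightarrow> complex) \<Rightarrow> (nat \<Rightarrow> nat \<Rightarrow> complex) \<Rightarrow> bool" where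
  "switching_equiv K m A B \<longleftrightarrow>
     (\<exists>q d. q permutes {..<m} \<and> (\<forall>i<m. d i \<in> K \<and> cmod (d i) = 1) \<and>
        (\<forall>i<m. \<forall>j<m. A i j = d (q i) * B (q i) (q j) / d (q j)))"

definition principal_sub :: "(nat \<Rightarrow> nat \<Rightarrow> complex) \<Rightarrow> nat set \<Rightarrow> nat \<Rightarrow> nat \<Rightarrow> complex" where
  "principal_sub Q S a b = Q (sorted_list_of_set S ! a) (sorted_list_of_set S ! b)"

definition JmI :: "nat \<Rightarrow> nat \<Rightarrow> complex" where
  "JmI i j = (if i = j then 0 else 1)"

end

theory Submission
  imports Defs "HOL-Analysis.L2_Norm"
begin

text \<open>Write \<open>y = V x\<close> and \<open>A = V\<^sup>* D V\<close> for the set \<open>S\<close> of ones of \<open>D\<close>, \<open>|S| = m\<close>. Since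
  \<open>V V\<^sup>* = (k/n) I + c Q\<close> with \<open>Q\<close> Seidel, one gets
  \<open>\<parallel>A x\<parallel>\<^sup>2 = \<lambda> \<parallel>y\<^sub>S\<parallel>\<^sup>2 - (c/2) \<Sum>\<^bsub>i \<noteq> p \<in> S\<^esub> |y\<^sub>i - Q\<^sub>i\<^sub>p y\<^sub>p|\<^sup>2\<close> with \<open>\<lambda> = k/n + (m - 1) c\<close>,
  while \<open>\<parallel>y\<^sub>S\<parallel>\<^sup>2 = \<langle>A x, x\<rangle> \<le> \<parallel>A x\<parallel>\<close> for unit \<open>x\<close>; hence \<open>\<parallel>A x\<parallel> \<le> \<lambda>\<close>.
  If some triangle of \<open>Q\<^sub>S\<close> has product \<open>\<noteq> 1\<close>, the defect sum controls \<open>\<parallel>y\<^sub>S\<parallel>\<^sup>2\<close> and the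
  bound becomes uniformly strict. If all triangle products are \<open>1\<close>, then \<open>Q\<^sub>i\<^sub>p = u\<^sub>i conj(u\<^sub>p)\<close>
  for unimodular \<open>u\<close>, i.e. \<open>Q\<^sub>S\<close> is switching equivalent to \<open>J - I\<close>, and conversely then
  \<open>\<Sum>\<^bsub>p\<in>S\<^esub> u\<^sub>p f\<^sub>p\<close> is an eigenvector of \<open>A\<close> for \<open>\<lambda>\<close>.\<close>

definition mat_vec :: "nat \<Rightarrow> (nat \<Rightarrow> nat \<Rightarrow> complex) \<Rightarrow> (nat \<Rightarrow> complex) \<Rightarrow> nat \<Rightarrow> complex" where
  "mat_vec k A x i = (\<Sum>j<k. A i j * x j)"

lemma opnorm_eq_Sup_mat_vec:
  "opnorm K k A = Sup {vnorm k (mat_vec k A x) | x. (\<forall>j<k. x j \<in> K) \<and> vnorm k x = 1}"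
  unfolding opnorm_def mat_vec_def ..

lemma mat_vec_scale: "mat_vec k A (\<lambda>j. c * x j) = (\<lambda>i. c * mat_vec k A x i)"
  unfolding mat_vec_def by (simp add: sum_distrib_left mult_ac)

lemma power2_of_real_cmod: "(complex_of_real (cmod z))\<^sup>2 = z * cnj z"
  using complex_norm_square[of z] by simp

lemma vnorm_nonneg: "0 \<le> vnorm k x"
  unfolding vnorm_def by (simp add: sum_nonneg)

lemma power2_vnorm: "(vnorm k x)\<^sup>2 = (\<Sum>j<k. (cmod (x j))\<^sup>2)"
  unfolding vnorm_def by (simp add: sum_nonneg)

lemma vnorm_eq_L2_set: "vnorm k x = L2_set (\<lambda>j. cmod (x j)) {..<k}"
  unfolding vnorm_def L2_set_def by simp

lemma vnorm_scale: "vnorm k (\<lambda>j. c * x j) = cmod c * vnorm k x"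
  unfolding vnorm_def
  by (simp add: norm_mult power_mult_distrib sum_distrib_left[symmetric] real_sqrt_mult)

lemma vnorm_eq_0_iff: "vnorm k x = 0 \<longleftrightarrow> (\<forall>j<k. x j = 0)"
  unfolding vnorm_def by (auto simp: sum_nonneg_eq_0_iff)

lemma norm_inner_le_vnorm: "cmod (\<Sum>j<k. x j * cnj (z j)) \<le> vnorm k x * vnorm k z"
proof -
  have "cmod (\<Sum>j<k. x j * cnj (z j)) \<le> (\<Sum>j<k. \<bar>cmod (x j)\<bar> * \<bar>cmod (z j)\<bar>)"
    by (rule order_trans[OF norm_sum]) (simp add: norm_mult)
  also have "\<dots> \<le> vnorm k x * vnorm k z"
    unfolding vnorm_eq_L2_set by (rule L2_set_mult_ineq)
  finally show ?thesis .
qed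

lemma unit_vector_exists:
  assumes "K = \<real> \<or> K = UNIV" "1 \<le> k"
  shows "\<exists>x. (\<forall>j<k. x j \<in> K) \<and> vnorm k x = 1"
proof -
  define x :: "nat \<Rightarrow> complex" where "x = (\<lambda>j. if j = 0 then 1 else 0)"
  have "(\<Sum>j<k. (cmod (x j))\<^sup>2) = (\<Sum>j<k. if j = 0 then 1 else 0)"
    by (intro sum.cong) (auto simp: x_def)
  also have "\<dots> = 1" using assms(2) by simp
  finally have "(\<Sum>j<k. (cmod (x j))\<^sup>2) = 1" .
  then have "vnorm k x = 1" unfolding vnorm_def by simp
  moreover have "\<forall>j<k. x j \<in> K" using assms(1) by (auto simp: x_def)
  ultimately show ?thesis by blast
qed

lemma opnorm_le:
  assumes "K = \<real> \<or> K = UNIV" "1 \<le> k"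
    and "\<And>x. \<forall>j<k. x j \<in> K \<Longrightarrow> vnorm k x = 1 \<Longrightarrow> vnorm k (mat_vec k A x) \<le> B"
  shows "opnorm K k A \<le> B"
  unfolding opnorm_eq_Sup_mat_vec
  using unit_vector_exists[OF assms(1,2)] assms(3) by (intro cSup_least) auto

lemma opnorm_eq_eigenvalue:
  assumes field: "K = \<real> \<or> K = UNIV"
    and xK: "\<forall>j<k. x j \<in> K" and x0: "vnorm k x \<noteq> 0"
    and eig: "mat_vec k A x = (\<lambda>j. of_real L * x j)" and L0: "0 \<le> L"
    and le: "\<And>z. \<forall>j<k. z j \<in> K \<Longrightarrow> vnorm k z = 1 \<Longrightarrow> vnorm k (mat_vec k A z) \<le> L"
  shows "opnorm K k A = L"
proof -
  define r where "r = 1 / vnorm k x"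
  define z where "z j = of_real r * x j" for j
  have x_pos: "0 < vnorm k x" using x0 vnorm_nonneg[of k x] by simp
  have zK: "\<forall>j<k. z j \<in> K" using field xK by (auto simp: z_def)
  have z1: "vnorm k z = 1"
    using x_pos unfolding z_def vnorm_scale by (simp add: r_def norm_divide)
  have "mat_vec k A z = (\<lambda>j. of_real L * z j)"
    by (simp add: z_def[abs_def] mat_vec_scale eig mult.left_commute)
  then have "vnorm k (mat_vec k A z) = L"
    using z1 L0 by (simp add: vnorm_scale)
  then show ?thesis
    unfolding opnorm_eq_Sup_mat_vec using zK z1 le by (intro cSup_eq_maximum) auto
qed

lemma le_max_of_power2_le:
  fixes a N L :: real
  assumes "0 \<le> N" "N \<le> a" "a\<^sup>2 \<le> L * N"
  shows "a \<le> max 0 L"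
proof (cases "0 < L")
  case True
  then have "L * N \<le> L * a" using assms by (intro mult_left_mono) auto
  then have "a * a \<le> L * a" using assms by (simp add: power2_eq_square)
  moreover have "0 \<le> a" using assms by linarith
  ultimately show ?thesis by (cases "a = 0") (auto simp: mult_le_cancel_right)
next
  case False
  then have "a\<^sup>2 \<le> 0" using assms mult_nonpos_nonneg[of L N] by linarith
  then show ?thesis by simp
qed

lemma Max_image_le_and_eq_iff:
  fixes g :: "'a \<Rightarrow> 'b::linorder"
  assumes "finite A" "A \<noteq> {}" "\<forall>a\<in>A. g a \<le> L"
  shows "Max (g ` A) \<le> L \<and> (Max (g ` A) = L \<longleftrightarrow> (\<exists>a\<in>A. g a = L))"
proof -
  have "Max (g ` A) \<in> g ` A" using assms by simp
  moreover have "g a \<le> Max (g ` A)" if "a \<in> A" for a using assms that by simp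
  ultimately show ?thesis using assms(3) by (metis imageE order_antisym)
qed

text \<open>\<open>frame_coeff f k x = V x\<close> and \<open>frame_gram f k = V V\<^sup>*\<close>.\<close>

definition frame_coeff :: "(nat \<Rightarrow> nat \<Rightarrow> complex) \<Rightarrow> nat \<Rightarrow> (nat \<Rightarrow> complex) \<Rightarrow> nat \<Rightarrow> complex" where
  "frame_coeff f k x i = (\<Sum>l<k. analysis f i l * x l)"

definition frame_gram :: "(nat \<Rightarrow> nat \<Rightarrow> complex) \<Rightarrow> nat \<Rightarrow> nat \<Rightarrow> nat \<Rightarrow> complex" where
  "frame_gram f k i p = (\<Sum>l<k. analysis f i l * cnj (analysis f p l))"

lemma mat_vec_VDV:
  assumes "finite S"
  shows "mat_vec k (VDV f S) x j = (\<Sum>i\<in>S. f i j * frame_coeff f k x i)"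
  using assms unfolding mat_vec_def VDV_def analysis_def frame_coeff_def
  by (simp add: sum_distrib_left sum_distrib_right mult.assoc sum.swap[of _ S])

lemma power2_vnorm_mat_vec_VDV:
  assumes "finite S"
  shows "complex_of_real ((vnorm k (mat_vec k (VDV f S) x))\<^sup>2) =
    (\<Sum>i\<in>S. \<Sum>p\<in>S. cnj (frame_coeff f k x i) * frame_gram f k i p * frame_coeff f k x p)"
proof -
  let ?y = "frame_coeff f k x"
  have "complex_of_real ((vnorm k (mat_vec k (VDV f S) x))\<^sup>2) =
      (\<Sum>j<k. mat_vec k (VDV f S) x j * cnj (mat_vec k (VDV f S) x j))"
    by (simp add: power2_vnorm power2_of_real_cmod)
  also have "\<dots> = (\<Sum>j<k. (\<Sum>i\<in>S. cnj (f i j) * cnj (?y i)) * (\<Sum>p\<in>S. f p j * ?y p))"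
    by (simp add: mat_vec_VDV[OF assms] mult.commute)
  also have "\<dots> = (\<Sum>j<k. \<Sum>i\<in>S. \<Sum>p\<in>S. cnj (?y i) * (cnj (f i j) * f p j) * ?y p)"
    unfolding sum_product by (intro sum.cong refl) (simp add: mult_ac)
  also have "\<dots> = (\<Sum>i\<in>S. \<Sum>p\<in>S. \<Sum>j<k. cnj (?y i) * (cnj (f i j) * f p j) * ?y p)"
    by (subst sum.swap) (intro sum.cong refl sum.swap)
  also have "\<dots> = (\<Sum>i\<in>S. \<Sum>p\<in>S. cnj (?y i) * frame_gram f k i p * ?y p)"
    unfolding frame_gram_def analysis_def by (simp add: sum_distrib_left sum_distrib_right)
  finally show ?thesis .
qed

lemma sum_power2_frame_coeff_le:
  assumes "finite S"
  shows "(\<Sum>i\<in>S. (cmod (frame_coeff f k x i))\<^sup>2) \<le> vnorm k (mat_vec k (VDV f S) x) * vnorm k x"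
proof -
  have "(\<Sum>j<k. mat_vec k (VDV f S) x j * cnj (x j)) =
      (\<Sum>j<k. \<Sum>i\<in>S. f i j * frame_coeff f k x i * cnj (x j))"
    by (simp add: mat_vec_VDV[OF assms] sum_distrib_right)
  also have "\<dots> = (\<Sum>i\<in>S. frame_coeff f k x i * cnj (frame_coeff f k x i))"
    unfolding frame_coeff_def analysis_def
    by (simp add: sum.swap[of _ S] sum_distrib_left sum_distrib_right mult_ac)
  finally have "complex_of_real (\<Sum>i\<in>S. (cmod (frame_coeff f k x i))\<^sup>2) =
      (\<Sum>j<k. mat_vec k (VDV f S) x j * cnj (x j))"
    by (simp add: power2_of_real_cmod)
  moreover have "0 \<le> (\<Sum>i\<in>S. (cmod (frame_coeff f k x i))\<^sup>2)" by (simp add: sum_nonneg)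
  ultimately have "(\<Sum>i\<in>S. (cmod (frame_coeff f k x i))\<^sup>2) = cmod (\<Sum>j<k. mat_vec k (VDV f S) x j * cnj (x j))"
    by (metis norm_of_real abs_of_nonneg)
  also have "\<dots> \<le> vnorm k (mat_vec k (VDV f S) x) * vnorm k x"
    by (rule norm_inner_le_vnorm)
  finally show ?thesis .
qed

definition switching_defect :: "(nat \<Rightarrow> nat \<Rightarrow> complex) \<Rightarrow> nat set \<Rightarrow> (nat \<Rightarrow> complex) \<Rightarrow> real" where
  "switching_defect Q S u = (\<Sum>i\<in>S. \<Sum>p\<in>S-{i}. (cmod (u i - Q i p * u p))\<^sup>2)"

lemma switching_defect_nonneg: "0 \<le> switching_defect Q S u"
  unfolding switching_defect_def by (intro sum_nonneg) auto

lemma power2_norm_diff_unimodular: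
  assumes "cmod q = 1"
  shows "(cmod (a - q * b))\<^sup>2 = (cmod a)\<^sup>2 + (cmod b)\<^sup>2 - 2 * Re (cnj a * q * b)"
proof -
  have "q * cnj q = 1" using assms power2_of_real_cmod[of q] by simp
  then have "complex_of_real ((cmod (a - q * b))\<^sup>2) =
      complex_of_real ((cmod a)\<^sup>2 + (cmod b)\<^sup>2) - (cnj a * q * b + cnj (cnj a * q * b))"
    by (simp add: power2_of_real_cmod algebra_simps)
  also have "\<dots> = complex_of_real ((cmod a)\<^sup>2 + (cmod b)\<^sup>2 - 2 * Re (cnj a * q * b))"
    by (simp only: complex_add_cnj of_real_diff)
  finally show ?thesis using of_real_eq_iff by blast
qed

lemma Re_quadratic_form_unimodular:
  assumes fin: "finite S" and diag: "\<forall>i\<in>S. Q i i = 0"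
    and unimod: "\<forall>i\<in>S. \<forall>p\<in>S. i \<noteq> p \<longrightarrow> cmod (Q i p) = 1"
  shows "Re (\<Sum>i\<in>S. \<Sum>p\<in>S. cnj (u i) * Q i p * u p) =
     (real (card S) - 1) * (\<Sum>i\<in>S. (cmod (u i))\<^sup>2) - switching_defect Q S u / 2"
proof -
  let ?N = "\<Sum>i\<in>S. (cmod (u i))\<^sup>2"
  have row: "(\<Sum>p\<in>S-{i}. (cmod (u i - Q i p * u p))\<^sup>2) =
      (real (card S) - 1) * (cmod (u i))\<^sup>2 + (?N - (cmod (u i))\<^sup>2)
      - 2 * Re (\<Sum>p\<in>S. cnj (u i) * Q i p * u p)" if i: "i \<in> S" for i
  proof -
    have "(\<Sum>p\<in>S-{i}. (cmod (u i - Q i p * u p))\<^sup>2) =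
        (\<Sum>p\<in>S-{i}. (cmod (u i))\<^sup>2 + (cmod (u p))\<^sup>2 - 2 * Re (cnj (u i) * Q i p * u p))"
      using unimod i by (intro sum.cong) (auto simp: power2_norm_diff_unimodular)
    also have "\<dots> = real (card (S - {i})) * (cmod (u i))\<^sup>2 + (\<Sum>p\<in>S-{i}. (cmod (u p))\<^sup>2)
        - 2 * Re (\<Sum>p\<in>S-{i}. cnj (u i) * Q i p * u p)"
      by (simp add: sum.distrib sum_subtractf sum_distrib_left Re_sum)
    also have "(\<Sum>p\<in>S-{i}. (cmod (u p))\<^sup>2) = ?N - (cmod (u i))\<^sup>2"
      using fin i by (simp add: sum_diff1)
    also have "(\<Sum>p\<in>S-{i}. cnj (u i) * Q i p * u p) = (\<Sum>p\<in>S. cnj (u i) * Q i p * u p)"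
      using fin i diag by (simp add: sum_diff1)
    also have "real (card (S - {i})) = real (card S) - 1"
    proof -
      have "0 < card S" using fin i card_gt_0_iff by blast
      then show ?thesis using fin i by (simp add: of_nat_diff Suc_le_eq)
    qed
    finally show ?thesis .
  qed
  have "switching_defect Q S u = (\<Sum>i\<in>S. (real (card S) - 1) * (cmod (u i))\<^sup>2
      + (?N - (cmod (u i))\<^sup>2) - 2 * Re (\<Sum>p\<in>S. cnj (u i) * Q i p * u p))"
    unfolding switching_defect_def using row by (rule sum.cong[OF refl])
  also have "\<dots> = (real (card S) - 1) * ?N + (real (card S) * ?N - ?N)
      - 2 * Re (\<Sum>i\<in>S. \<Sum>p\<in>S. cnj (u i) * Q i p * u p)"
    by (simp add: sum.distrib sum_subtractf sum_distrib_left Re_sum)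
  finally show ?thesis by (simp add: algebra_simps)
qed

lemma norm_switching_term_le:
  assumes "finite S" "i \<in> S" "p \<in> S" "i \<noteq> p"
  shows "cmod (u i - Q i p * u p) \<le> sqrt (switching_defect Q S u)"
proof -
  have "(cmod (u i - Q i p * u p))\<^sup>2 \<le> (\<Sum>q\<in>S-{i}. (cmod (u i - Q i q * u q))\<^sup>2)"
    using assms by (intro member_le_sum) auto
  also have "\<dots> \<le> switching_defect Q S u"
    unfolding switching_defect_def using assms
    by (intro member_le_sum[where f = "\<lambda>i. \<Sum>q\<in>S-{i}. (cmod (u i - Q i q * u q))\<^sup>2"] sum_nonneg) auto
  finally show ?thesis by (simp add: real_le_rsqrt)
qed

text \<open>With \<open>t\<^sub>1, t\<^sub>2, t\<^sub>3\<close> the defect terms around the triangle \<open>i, p, r\<close>, one has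
  \<open>(1 - \<omega>) u\<^sub>i = t\<^sub>1 + Q\<^sub>i\<^sub>p t\<^sub>2 + Q\<^sub>i\<^sub>p Q\<^sub>p\<^sub>r t\<^sub>3\<close>; this bounds \<open>u\<^sub>i\<close>, and then every \<open>u\<^sub>q\<close>, by the defect.\<close>

lemma sum_power2_le_switching_defect:
  assumes fin: "finite S" and unimod: "\<forall>i\<in>S. \<forall>p\<in>S. i \<noteq> p \<longrightarrow> cmod (Q i p) = 1"
    and S: "i \<in> S" "p \<in> S" "r \<in> S" and distinct: "i \<noteq> p" "p \<noteq> r" "r \<noteq> i"
    and \<omega>: "\<omega> = Q i p * Q p r * Q r i" "\<omega> \<noteq> 1"
  shows "(\<Sum>q\<in>S. (cmod (u q))\<^sup>2) \<le> real (card S) * (1 + 3 / cmod (1 - \<omega>))\<^sup>2 * switching_defect Q S u"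
proof -
  define e where "e = sqrt (switching_defect Q S u)"
  define C where "C = 1 + 3 / cmod (1 - \<omega>)"
  have e0: "0 \<le> e" unfolding e_def using switching_defect_nonneg by simp
  have term_le: "cmod (u a - Q a b * u b) \<le> e" if "a \<in> S" "b \<in> S" "a \<noteq> b" for a b
    unfolding e_def using norm_switching_term_le fin that by blast
  have "(1 - \<omega>) * u i = (u i - Q i p * u p) + Q i p * (u p - Q p r * u r) + Q i p * Q p r * (u r - Q r i * u i)"
    unfolding \<omega> by (simp add: algebra_simps)
  then have "cmod (1 - \<omega>) * cmod (u i) \<le>
      cmod (u i - Q i p * u p) + cmod (Q i p * (u p - Q p r * u r)) + cmod (Q i p * Q p r * (u r - Q r i * u i))"
    by (metis norm_mult norm_triangle_le add_mono order_refl)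
  also have "\<dots> \<le> 3 * e"
    using term_le[of i p] term_le[of p r] term_le[of r i] S distinct unimod by (simp add: norm_mult)
  finally have ui: "cmod (u i) \<le> 3 * e / cmod (1 - \<omega>)"
    using \<omega>(2) by (simp add: field_simps)
  have bound: "cmod (u q) \<le> C * e" if q: "q \<in> S" for q
  proof (cases "q = i")
    case True
    then show ?thesis using ui e0 unfolding C_def by (simp add: algebra_simps)
  next
    case False
    have "cmod (u q) \<le> cmod (u q - Q q i * u i) + cmod (Q q i * u i)"
      by (metis norm_triangle_ineq diff_add_cancel)
    also have "\<dots> \<le> e + cmod (u i)"
      using term_le[OF q S(1) False] unimod q S(1) False by (simp add: norm_mult)
    finally show ?thesis using ui unfolding C_def by (simp add: algebra_simps)
  qed
  have "(\<Sum>q\<in>S. (cmod (u q))\<^sup>2) \<le> real (card S) * (C * e)\<^sup>2"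
    using bound by (intro sum_bounded_above power_mono) auto
  also have "(C * e)\<^sup>2 = C\<^sup>2 * switching_defect Q S u"
    unfolding e_def using switching_defect_nonneg by (simp add: power_mult_distrib)
  finally show ?thesis unfolding C_def by (simp add: mult.assoc)
qed

definition switching_vector :: "complex set \<Rightarrow> nat set \<Rightarrow> (nat \<Rightarrow> nat \<Rightarrow> complex) \<Rightarrow> (nat \<Rightarrow> complex) \<Rightarrow> bool" where
  "switching_vector K S Q u \<longleftrightarrow>
    (\<forall>i\<in>S. u i \<in> K \<and> cmod (u i) = 1) \<and> (\<forall>i\<in>S. \<forall>p\<in>S. i \<noteq> p \<longrightarrow> Q i p = u i * cnj (u p))"

lemma switching_vector_if_triangles:
  assumes one: "1 \<in> K"
    and herm: "\<And>i p. i \<in> S \<Longrightarrow> p \<in> S \<Longrightarrow> Q i p = cnj (Q p i)"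
    and unimod: "\<forall>i\<in>S. \<forall>p\<in>S. i \<noteq> p \<longrightarrow> cmod (Q i p) = 1"
    and QK: "\<forall>i\<in>S. \<forall>p\<in>S. Q i p \<in> K"
    and tri: "\<forall>i\<in>S. \<forall>p\<in>S. \<forall>r\<in>S. i \<noteq> p \<and> p \<noteq> r \<and> r \<noteq> i \<longrightarrow> Q i p * Q p r * Q r i = 1"
  shows "\<exists>u. switching_vector K S Q u"
proof (cases "S = {}")
  case True
  then show ?thesis by (simp add: switching_vector_def)
next
  case False
  then obtain i\<^sub>0 where i\<^sub>0: "i\<^sub>0 \<in> S" by blast
  define u where "u i = (if i = i\<^sub>0 then 1 else Q i i\<^sub>0)" for i
  have cnj_inv: "Q a b * cnj (Q a b) = 1" if "a \<in> S" "b \<in> S" "a \<noteq> b" for a b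
    using unimod that power2_of_real_cmod[of "Q a b"] by simp
  have "Q i p = u i * cnj (u p)" if i: "i \<in> S" and p: "p \<in> S" and ip: "i \<noteq> p" for i p
  proof -
    consider "i = i\<^sub>0" | "p = i\<^sub>0" | "i \<noteq> i\<^sub>0" "p \<noteq> i\<^sub>0" by blast
    then show ?thesis
    proof cases
      case 1
      then show ?thesis using herm[OF i p] ip by (simp add: u_def)
    next
      case 2
      then show ?thesis using ip by (simp add: u_def)
    next
      case 3
      have "Q i i\<^sub>0 * Q i\<^sub>0 p * Q p i = 1" using tri i p i\<^sub>0 ip 3 by simp
      then have "(Q i i\<^sub>0 * cnj (Q p i\<^sub>0)) * cnj (Q i p) = Q i p * cnj (Q i p)"
        by (simp only: herm[OF i\<^sub>0 p] herm[OF p i] cnj_inv[OF i p ip])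
      then have "Q i i\<^sub>0 * cnj (Q p i\<^sub>0) = Q i p"
        using cnj_inv[OF i p ip] by (metis mult_right_cancel mult_zero_right zero_neq_one)
      then show ?thesis using 3 by (simp add: u_def)
    qed
  qed
  moreover have "u i \<in> K \<and> cmod (u i) = 1" if "i \<in> S" for i
    using one QK unimod that i\<^sub>0 by (simp add: u_def)
  ultimately show ?thesis unfolding switching_vector_def by blast
qed

lemma bij_betw_principal_sub_index:
  assumes "finite S" "card S = m"
  shows "bij_betw ((!) (sorted_list_of_set S)) {..<m} S"
  using assms by (intro bij_betw_nth) auto

lemma switching_vector_if_switching_equiv:
  assumes fin: "finite S" and m: "card S = m"
    and switch: "switching_equiv K m (principal_sub Q S) JmI"
  shows "\<exists>u. switching_vector K S Q u"
proof -
  define \<sigma> where "\<sigma> = (!) (sorted_list_of_set S)"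
  have bij: "bij_betw \<sigma> {..<m} S" unfolding \<sigma>_def using fin m by (rule bij_betw_principal_sub_index)
  obtain q d where q: "q permutes {..<m}" and d: "\<forall>a<m. d a \<in> K \<and> cmod (d a) = 1"
    and eq: "\<forall>a<m. \<forall>b<m. Q (\<sigma> a) (\<sigma> b) = d (q a) * JmI (q a) (q b) / d (q b)"
    using switch unfolding switching_equiv_def principal_sub_def \<sigma>_def by blast
  define u where "u i = d (q (inv_into {..<m} \<sigma> i))" for i
  have inv: "inv_into {..<m} \<sigma> i < m" "\<sigma> (inv_into {..<m} \<sigma> i) = i" if "i \<in> S" for i
    using bij_betw_apply[OF bij_betw_inv_into[OF bij] that] bij_betw_inv_into_right[OF bij that]
    by auto
  have unit: "\<forall>i\<in>S. u i \<in> K \<and> cmod (u i) = 1"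
    using d inv permutes_in_image[OF q] by (simp add: u_def)
  have "Q i p = u i * cnj (u p)" if i: "i \<in> S" and p: "p \<in> S" and ip: "i \<noteq> p" for i p
  proof -
    define a b where "a = inv_into {..<m} \<sigma> i" and "b = inv_into {..<m} \<sigma> p"
    have "a \<noteq> b" using inv[OF i] inv[OF p] ip unfolding a_def b_def by metis
    then have ab: "a < m" "b < m" "q a \<noteq> q b"
      using inv[OF i] inv[OF p] permutes_inj[OF q] unfolding a_def b_def by (auto dest: injD)
    have "Q i p = Q (\<sigma> a) (\<sigma> b)" using inv[OF i] inv[OF p] by (simp add: a_def b_def)
    also have "\<dots> = d (q a) * JmI (q a) (q b) / d (q b)" using eq ab by blast
    also have "\<dots> = u i / u p" using ab by (simp add: JmI_def u_def a_def b_def)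
    finally show ?thesis using unit p by (simp add: divide_conv_cnj)
  qed
  then show ?thesis using unit unfolding switching_vector_def by blast
qed

lemma switching_equiv_if_switching_vector:
  assumes fin: "finite S" and m: "card S = m" and diag: "\<forall>i\<in>S. Q i i = 0"
    and u: "switching_vector K S Q u"
  shows "switching_equiv K m (principal_sub Q S) JmI"
proof -
  define \<sigma> where "\<sigma> = (!) (sorted_list_of_set S)"
  have bij: "bij_betw \<sigma> {..<m} S" unfolding \<sigma>_def using fin m by (rule bij_betw_principal_sub_index)
  have \<sigma>S: "\<sigma> a \<in> S" if "a < m" for a using bij that by (auto dest: bij_betw_apply)
  have \<sigma>_eq: "\<sigma> a = \<sigma> b \<longleftrightarrow> a = b" if "a < m" "b < m" for a b
    using bij_betw_imp_inj_on[OF bij] that by (auto dest: inj_onD)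
  have "Q (\<sigma> a) (\<sigma> b) = u (\<sigma> a) * JmI a b / u (\<sigma> b)" if ab: "a < m" "b < m" for a b
  proof (cases "a = b")
    case True
    then show ?thesis using diag \<sigma>S[OF ab(1)] by (simp add: JmI_def)
  next
    case False
    then have "\<sigma> a \<noteq> \<sigma> b" using \<sigma>_eq[OF ab] by simp
    then show ?thesis
      using False u \<sigma>S[OF ab(1)] \<sigma>S[OF ab(2)] by (simp add: switching_vector_def JmI_def divide_conv_cnj)
  qed
  then show ?thesis
    unfolding switching_equiv_def principal_sub_def \<sigma>_def[symmetric] using u \<sigma>S
    by (intro exI[of _ id] exI[of _ "u \<circ> \<sigma>"]) (simp add: switching_vector_def)
qed

definition equiangular_bound :: "nat \<Rightarrow> nat \<Rightarrow> nat \<Rightarrow> real" where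
  "equiangular_bound n k m = real k / real n + (real m - 1) * c_nk n k"

locale equiangular_gram =
  fixes K :: "complex set" and n k :: nat and f Q :: "nat \<Rightarrow> nat \<Rightarrow> complex"
  assumes field: "K = \<real> \<or> K = UNIV"
    and k_pos: "1 \<le> k" and k_lt_n: "k < n"
    and frame_in_field: "\<And>i j. i < n \<Longrightarrow> j < k \<Longrightarrow> f i j \<in> K"
    and seidel: "seidel n Q"
    and gram: "\<And>i j. i < n \<Longrightarrow> j < n \<Longrightarrow> frame_gram f k i j =
      (if i = j then of_real (real k / real n) else 0) + of_real (c_nk n k) * Q i j"
begin

lemma c_nk_pos: "0 < c_nk n k"
  using k_pos k_lt_n unfolding c_nk_def by (auto intro!: divide_pos_pos mult_pos_pos)

lemma equiangular_bound_pos: "1 \<le> m \<Longrightarrow> 0 < equiangular_bound n k m"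
  using k_pos k_lt_n c_nk_pos unfolding equiangular_bound_def by (auto intro!: add_pos_nonneg)

lemma Q_hermitian: "i < n \<Longrightarrow> j < n \<Longrightarrow> Q i j = cnj (Q j i)"
  and Q_diag: "i < n \<Longrightarrow> Q i i = 0"
  and Q_unimodular: "i < n \<Longrightarrow> j < n \<Longrightarrow> i \<noteq> j \<Longrightarrow> cmod (Q i j) = 1"
  using seidel unfolding seidel_def by blast+

lemma Q_unimodular_on: "S \<subseteq> {..<n} \<Longrightarrow> \<forall>i\<in>S. \<forall>p\<in>S. i \<noteq> p \<longrightarrow> cmod (Q i p) = 1"
  using Q_unimodular by blast

lemma Q_in_field:
  assumes "i < n" "j < n"
  shows "Q i j \<in> K"
proof (cases "K = UNIV \<or> i = j")
  case True
  then show ?thesis using Q_diag field assms by auto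
next
  case False
  then have K: "K = \<real>" using field by blast
  have "frame_gram f k i j \<in> \<real>"
    using frame_in_field assms unfolding K frame_gram_def analysis_def
    by (auto intro!: sum_in_Reals Reals_mult simp: Reals_cnj_iff)
  moreover have "Q i j = frame_gram f k i j / of_real (c_nk n k)"
    using gram[OF assms] False c_nk_pos by simp
  ultimately show ?thesis unfolding K by simp
qed

lemma power2_vnorm_VDV:
  assumes S: "S \<subseteq> {..<n}"
  shows "(vnorm k (mat_vec k (VDV f S) x))\<^sup>2 =
    equiangular_bound n k (card S) * (\<Sum>i\<in>S. (cmod (frame_coeff f k x i))\<^sup>2)
    - c_nk n k / 2 * switching_defect Q S (frame_coeff f k x)"
proof -
  have fin: "finite S" using S finite_subset by blast
  let ?y = "frame_coeff f k x" and ?t = "real k / real n" and ?c = "c_nk n k"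
  have row: "(\<Sum>p\<in>S. cnj (?y i) * frame_gram f k i p * ?y p) =
      of_real (?t * (cmod (?y i))\<^sup>2) + of_real ?c * (\<Sum>p\<in>S. cnj (?y i) * Q i p * ?y p)"
    if i: "i \<in> S" for i
  proof -
    have "(\<Sum>p\<in>S. cnj (?y i) * frame_gram f k i p * ?y p) =
        (\<Sum>p\<in>S. (if p = i then of_real (?t * (cmod (?y i))\<^sup>2) else 0) + of_real ?c * (cnj (?y i) * Q i p * ?y p))"
    proof (intro sum.cong refl)
      fix p assume "p \<in> S"
      then have "i < n" "p < n" using S i by auto
      then show "cnj (?y i) * frame_gram f k i p * ?y p =
          (if p = i then of_real (?t * (cmod (?y i))\<^sup>2) else 0) + of_real ?c * (cnj (?y i) * Q i p * ?y p)"
        by (simp add: gram algebra_simps power2_of_real_cmod)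
    qed
    also have "\<dots> = of_real (?t * (cmod (?y i))\<^sup>2) + of_real ?c * (\<Sum>p\<in>S. cnj (?y i) * Q i p * ?y p)"
      using fin i by (simp only: sum.distrib sum.delta if_True sum_distrib_left)
    finally show ?thesis .
  qed
  have "complex_of_real ((vnorm k (mat_vec k (VDV f S) x))\<^sup>2) =
      (\<Sum>i\<in>S. of_real (?t * (cmod (?y i))\<^sup>2) + of_real ?c * (\<Sum>p\<in>S. cnj (?y i) * Q i p * ?y p))"
    unfolding power2_vnorm_mat_vec_VDV[OF fin] using row by (rule sum.cong[OF refl])
  also have "\<dots> = of_real (?t * (\<Sum>i\<in>S. (cmod (?y i))\<^sup>2))
      + of_real ?c * (\<Sum>i\<in>S. \<Sum>p\<in>S. cnj (?y i) * Q i p * ?y p)"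
    by (simp only: sum.distrib sum_distrib_left of_real_mult of_real_sum)
  finally have "(vnorm k (mat_vec k (VDV f S) x))\<^sup>2 = Re \<dots>"
    by (metis Re_complex_of_real)
  also have "\<dots> = ?t * (\<Sum>i\<in>S. (cmod (?y i))\<^sup>2) + ?c * Re (\<Sum>i\<in>S. \<Sum>p\<in>S. cnj (?y i) * Q i p * ?y p)"
    by simp
  also have "Re (\<Sum>i\<in>S. \<Sum>p\<in>S. cnj (?y i) * Q i p * ?y p) =
      (real (card S) - 1) * (\<Sum>i\<in>S. (cmod (?y i))\<^sup>2) - switching_defect Q S ?y / 2"
    using S fin Q_diag Q_unimodular_on by (intro Re_quadratic_form_unimodular) auto
  finally show ?thesis unfolding equiangular_bound_def by (simp add: algebra_simps)
qed

lemma vnorm_VDV_le_max: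
  assumes S: "S \<subseteq> {..<n}" and x: "vnorm k x = 1"
    and gap: "(\<Sum>i\<in>S. (cmod (frame_coeff f k x i))\<^sup>2) * \<delta> \<le>
      c_nk n k / 2 * switching_defect Q S (frame_coeff f k x)"
  shows "vnorm k (mat_vec k (VDV f S) x) \<le> max 0 (equiangular_bound n k (card S) - \<delta>)"
proof (rule le_max_of_power2_le)
  let ?N = "\<Sum>i\<in>S. (cmod (frame_coeff f k x i))\<^sup>2"
  show "0 \<le> ?N" by (simp add: sum_nonneg)
  show "?N \<le> vnorm k (mat_vec k (VDV f S) x)"
    using sum_power2_frame_coeff_le[of S f k x] S x finite_subset by auto
  show "(vnorm k (mat_vec k (VDV f S) x))\<^sup>2 \<le> (equiangular_bound n k (card S) - \<delta>) * ?N"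
    using power2_vnorm_VDV[OF S, of x] gap by (simp add: algebra_simps)
qed

lemma vnorm_VDV_le:
  assumes "S \<subseteq> {..<n}" "S \<noteq> {}" "vnorm k x = 1"
  shows "vnorm k (mat_vec k (VDV f S) x) \<le> equiangular_bound n k (card S)"
proof -
  have "0 < equiangular_bound n k (card S)"
    using assms finite_subset[OF assms(1)] by (intro equiangular_bound_pos) (simp add: Suc_le_eq card_gt_0_iff)
  then show ?thesis
    using vnorm_VDV_le_max[OF assms(1,3), of 0] c_nk_pos switching_defect_nonneg[of Q S] by simp
qed

lemma opnorm_VDV_le:
  assumes "S \<subseteq> {..<n}" "S \<noteq> {}"
  shows "opnorm K k (VDV f S) \<le> equiangular_bound n k (card S)"
  using field k_pos vnorm_VDV_le[OF assms] by (rule opnorm_le)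

text \<open>The operator norm is a supremum, so strictness needs a gap uniform in the unit vector;
  a triangle of \<open>Q\<^sub>S\<close> with product \<open>\<noteq> 1\<close> provides one.\<close>

lemma opnorm_VDV_less:
  assumes S: "S \<subseteq> {..<n}" and ipr: "i \<in> S" "p \<in> S" "r \<in> S" "i \<noteq> p" "p \<noteq> r" "r \<noteq> i"
    and \<omega>: "Q i p * Q p r * Q r i \<noteq> 1"
  shows "opnorm K k (VDV f S) < equiangular_bound n k (card S)"
proof -
  have fin: "finite S" using S finite_subset by blast
  define M where "M = real (card S) * (1 + 3 / cmod (1 - Q i p * Q p r * Q r i))\<^sup>2"
  define \<delta> where "\<delta> = c_nk n k / 2 / M"
  have "0 < card S" using fin ipr card_gt_0_iff by blast
  moreover have "0 < 1 + 3 / cmod (1 - Q i p * Q p r * Q r i)" by (intro add_pos_nonneg) auto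
  ultimately have M_pos: "0 < M" unfolding M_def by simp
  then have \<delta>_pos: "0 < \<delta>" using c_nk_pos by (simp add: \<delta>_def)
  have L_pos: "0 < equiangular_bound n k (card S)"
    using \<open>0 < card S\<close> by (intro equiangular_bound_pos) simp
  have "opnorm K k (VDV f S) \<le> max 0 (equiangular_bound n k (card S) - \<delta>)"
  proof (rule opnorm_le[OF field k_pos])
    fix x assume "vnorm k x = 1"
    moreover have "(\<Sum>q\<in>S. (cmod (frame_coeff f k x q))\<^sup>2) \<le> M * switching_defect Q S (frame_coeff f k x)"
      unfolding M_def using fin Q_unimodular_on[OF S] ipr \<omega>
      by (intro sum_power2_le_switching_defect) auto
    then have "(\<Sum>q\<in>S. (cmod (frame_coeff f k x q))\<^sup>2) * \<delta> \<le>
        c_nk n k / 2 * switching_defect Q S (frame_coeff f k x)"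
      using M_pos c_nk_pos by (simp add: \<delta>_def field_simps)
    ultimately show "vnorm k (mat_vec k (VDV f S) x) \<le> max 0 (equiangular_bound n k (card S) - \<delta>)"
      by (rule vnorm_VDV_le_max[OF S])
  qed
  also have "\<dots> < equiangular_bound n k (card S)" using L_pos \<delta>_pos by simp
  finally show ?thesis .
qed

lemma frame_coeff_switching_vector:
  assumes S: "S \<subseteq> {..<n}" and u: "switching_vector K S Q u" and i: "i \<in> S"
  shows "frame_coeff f k (\<lambda>l. \<Sum>p\<in>S. u p * f p l) i = of_real (equiangular_bound n k (card S)) * u i"
proof -
  have fin: "finite S" using S finite_subset by blast
  have "frame_coeff f k (\<lambda>l. \<Sum>p\<in>S. u p * f p l) i = (\<Sum>p\<in>S. u p * frame_gram f k i p)"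
    unfolding frame_coeff_def frame_gram_def analysis_def
    by (simp add: sum_distrib_left sum.swap[of _ S] mult_ac)
  also have "\<dots> = (\<Sum>p\<in>S. (if p = i then of_real (real k / real n) * u i else 0)
      + of_real (c_nk n k) * (if p = i then 0 else u i))"
  proof (intro sum.cong refl)
    fix p assume p: "p \<in> S"
    have ip: "i < n" "p < n" using S i p by auto
    show "u p * frame_gram f k i p = (if p = i then of_real (real k / real n) * u i else 0)
        + of_real (c_nk n k) * (if p = i then 0 else u i)"
    proof (cases "p = i")
      case True
      then show ?thesis using ip by (simp add: gram Q_diag)
    next
      case False
      then have "u p * frame_gram f k i p = of_real (c_nk n k) * (u i * (u p * cnj (u p)))"
        using ip u i p by (simp add: gram switching_vector_def mult_ac)
      moreover have "u p * cnj (u p) = 1"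
        using u p power2_of_real_cmod[of "u p"] by (simp add: switching_vector_def)
      ultimately show ?thesis using False by simp
    qed
  qed
  also have "\<dots> = of_real (real k / real n) * u i + of_real (c_nk n k) * (of_nat (card S - 1) * u i)"
    using fin i by (simp add: sum.distrib sum_distrib_left[symmetric] sum.If_cases Int_absorb1
      flip: Diff_eq)
  also have "\<dots> = of_real (equiangular_bound n k (card S)) * u i"
    using fin i card_gt_0_iff[of S] by (auto simp: equiangular_bound_def of_nat_diff algebra_simps)
  finally show ?thesis .
qed

lemma opnorm_VDV_eq_if_switching_vector:
  assumes S: "S \<subseteq> {..<n}" "S \<noteq> {}" and u: "switching_vector K S Q u"
  shows "opnorm K k (VDV f S) = equiangular_bound n k (card S)"
proof -
  have fin: "finite S" using S finite_subset by blast
  define L where "L = equiangular_bound n k (card S)"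
  have L_pos: "0 < L"
    unfolding L_def using fin S by (intro equiangular_bound_pos) (simp add: Suc_le_eq card_gt_0_iff)
  define x where "x l = (\<Sum>p\<in>S. u p * f p l)" for l
  have coeff: "frame_coeff f k x i = of_real L * u i" if "i \<in> S" for i
    unfolding x_def L_def using frame_coeff_switching_vector[OF S(1) u that] .
  have "mat_vec k (VDV f S) x = (\<lambda>j. of_real L * x j)"
  proof
    fix j
    have "mat_vec k (VDV f S) x j = (\<Sum>i\<in>S. f i j * (of_real L * u i))"
      unfolding mat_vec_VDV[OF fin] using coeff by (intro sum.cong) auto
    then show "mat_vec k (VDV f S) x j = of_real L * x j"
      by (simp add: x_def sum_distrib_left mult_ac)
  qed
  moreover have "\<forall>j<k. x j \<in> K"
    using field u frame_in_field S unfolding x_def switching_vector_def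
    by (auto intro!: sum_in_Reals Reals_mult)
  moreover have "vnorm k x \<noteq> 0"
  proof
    assume "vnorm k x = 0"
    moreover obtain i where i: "i \<in> S" using S by blast
    ultimately have "of_real L * u i = 0"
      using coeff[OF i] by (simp add: vnorm_eq_0_iff frame_coeff_def)
    then show False using u i L_pos by (auto simp: switching_vector_def)
  qed
  ultimately show ?thesis
    using field L_pos vnorm_VDV_le[OF S] unfolding L_def by (intro opnorm_eq_eigenvalue) auto
qed

lemma opnorm_VDV_eq_bound_iff:
  assumes S: "S \<subseteq> {..<n}" "S \<noteq> {}"
  shows "opnorm K k (VDV f S) = equiangular_bound n k (card S) \<longleftrightarrow>
    switching_equiv K (card S) (principal_sub Q S) JmI"
proof -
  have fin: "finite S" using S finite_subset by blast
  have "switching_equiv K (card S) (principal_sub Q S) JmI \<longleftrightarrow> (\<exists>u. switching_vector K S Q u)"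
    using switching_vector_if_switching_equiv[OF fin refl] switching_equiv_if_switching_vector[OF fin refl]
      S Q_diag by blast
  moreover have "\<exists>u. switching_vector K S Q u" if "opnorm K k (VDV f S) = equiangular_bound n k (card S)"
  proof (rule switching_vector_if_triangles)
    show "1 \<in> K" using field by auto
    show "Q i p = cnj (Q p i)" if "i \<in> S" "p \<in> S" for i p using Q_hermitian S that by auto
    show "\<forall>i\<in>S. \<forall>p\<in>S. Q i p \<in> K" using Q_in_field S by auto
    show "\<forall>i\<in>S. \<forall>p\<in>S. \<forall>r\<in>S. i \<noteq> p \<and> p \<noteq> r \<and> r \<noteq> i \<longrightarrow> Q i p * Q p r * Q r i = 1"
      using opnorm_VDV_less[OF S(1)] that by fastforce
  qed (rule Q_unimodular_on[OF S(1)])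
  ultimately show ?thesis using opnorm_VDV_eq_if_switching_vector[OF S] by blast
qed

end

theorem corollary3p5:
  fixes K :: "complex set" and n k :: nat
    and f :: "nat \<Rightarrow> nat \<Rightarrow> complex" and Q :: "nat \<Rightarrow> nat \<Rightarrow> complex"
  assumes field: "K = \<real> \<or> K = UNIV"
    and k_pos: "1 \<le> k" and k_lt_n: "k < n"
    and frame: "parseval_frame K n k f"
    and unif: "c_uniform K n k f 2"
    and seidelQ: "seidel n Q"
    and gram: "\<forall>i<n. \<forall>j<n. (\<Sum>l<k. analysis f i l * cnj (analysis f j l)) =
                 (if i = j then complex_of_real (real k / real n) else 0)
                 + complex_of_real (c_nk n k) * Q i j"
    and m: "1 \<le> m" "m \<le> n"
  shows "e_inf K n k f m \<le> real k / real n + (real m - 1) * c_nk n k \<and>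
         (e_inf K n k f m = real k / real n + (real m - 1) * c_nk n k \<longleftrightarrow>
          (\<exists>S\<in>Dsets n m. switching_equiv K m (principal_sub Q S) JmI))"
proof -
  interpret equiangular_gram K n k f Q
    using field k_pos k_lt_n frame seidelQ gram
    by unfold_locales (auto simp: parseval_frame_def frame_gram_def)
  have D: "S \<subseteq> {..<n}" "S \<noteq> {}" "card S = m" if "S \<in> Dsets n m" for S
    using that m by (auto simp: Dsets_def)
  have "finite (Dsets n m)" unfolding Dsets_def by (rule finite_subset[of _ "Pow {..<n}"]) auto
  moreover have "{..<m} \<in> Dsets n m" using m by (simp add: Dsets_def)
  then have "Dsets n m \<noteq> {}" by blast
  moreover have "\<forall>S\<in>Dsets n m. opnorm K k (VDV f S) \<le> equiangular_bound n k m"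
    using opnorm_VDV_le D by force
  ultimately have bound: "e_inf K n k f m \<le> equiangular_bound n k m \<and>
      (e_inf K n k f m = equiangular_bound n k m \<longleftrightarrow>
       (\<exists>S\<in>Dsets n m. opnorm K k (VDV f S) = equiangular_bound n k m))"
    unfolding e_inf_def by (rule Max_image_le_and_eq_iff)
  have "(\<exists>S\<in>Dsets n m. opnorm K k (VDV f S) = equiangular_bound n k m) \<longleftrightarrow>
      (\<exists>S\<in>Dsets n m. switching_equiv K m (principal_sub Q S) JmI)"
    using opnorm_VDV_eq_bound_iff D by (intro bex_cong refl) metis
  then show ?thesis using bound unfolding equiangular_bound_def by blast
qed

end
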